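(* Fix $s>0$. Let the opinion process $(O(t))_{t\ge0}$ be constructed from the marked Poisson process $(\mathcal N,\mathcal V)$ and an initial configuration $O(0)$ (with $O_j(0)=T_j$ for $j\in\partial\mathbb V$) as in the context, and let the backward walks $(R_{k,s}(t))_{t\le s}$, $k\in\overline{\mathbb V}$, be constructed from $(\mathcal N,\mathcal V,\mathcal U')$ as in the context. Then for every $k\in\overline{\mathbb V}$, almost surely, $O_k(s)=\mathbb E\left(O_{R_{k,s}(0)}(0)\,\middle|\,(\mathcal N,\mathcal V)\right).$
   Context: Graph: finite oriented graph $(\overline{\mathbb V},\overline E)$ with internal vertices $\mathbb V$, boundary vertices $\partial\mathbb V$, no edges between boundary vertices, boundary edges written $ij$ with $i\in\mathbb V$, $j\in\partial\mathbb V$; fixed boundary values $T_j>0$ for $j\in\partial\mathbb V$. Randomness: $\mathcal N=\bigcup_{ij\in\overline E}\mathcal N_{ij}$ where $(\mathcal N_{ij})$ are independent rate-1 Poisson processes on $\mathbb R$; each event $\tau\in\mathcal N$ carries two marks $V(\tau)$ and $U'(\tau)$, uniform on $[0,1]$; all marks are independent of each other and of $\mathcal N$. $\mathcal V=(V(\tau))$, $\mathcal U'=(U'(\tau))$. Opinion process construction: $O(t)$ is constant between events of $\mathcal N\cap(0,\infty)$; at $\tau\in\mathcal N_{ij}$, $\tau>0$, set $O_\ell(\tau)=V(\tau)O_i(\tau-)+(1-V(\tau))O_j(\tau-)$ for $\ell\in\{i,j\}\cap\mathbb V$ and $O_\ell(\tau)=O_\ell(\tau-)$ otherwise (boundary coordinates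 stay $T_j$). Backward walks: for $k\in\overline{\mathbb V}$, $R_{k,s}(s)=k$, and $t\mapsto R_{k,s}(t)$ (run backwards in time from $s$) changes only at event times $\tau\in\mathcal N\cap(-\infty,s]$: if $\tau\in\mathcal N_{ij}$ and the position just after $\tau$ (in forward time), $\ell:=R_{k,s}(\tau+)$, lies in $\{i,j\}$, then $R_{k,s}(\tau)=i$ if $\ell\in\mathbb V$ and $U'(\tau)<V(\tau)$; $R_{k,s}(\tau)=j$ if $\ell\in\mathbb V$ and $U'(\tau)>V(\tau)$; $R_{k,s}(\tau)=j$ if $\ell=j\in\partial\mathbb V$ (absorption at the boundary). If $\ell\notin\{i,j\}$ the position is unchanged. For $t\le s$, $R_{k,s}(t)$ equals its value at the earliest event time in $[t,s]$ that has been processed, i.e. $R_{k,s}(t)=R_{k,s}(\tau_t)$ with $\tau_t=\inf(\mathcal N\cap[t,s])$, and $R_{k,s}(t)=k$ if there is no such event. *)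

theory Defs
  imports "HOL-Probability.Probability"
begin

text \<open>Canonical realisation of the marked Poisson processes.
  A sample point assigns to every index (e, n), with e an edge and n an integer,
  a triple (gap, V-mark, U'-mark).\<close>

definition mark_dist :: "(real \<times> real \<times> real) measure" where
  "mark_dist = density lborel (exponential_density 1) \<Otimes>\<^sub>M
      (uniform_measure lborel {0..1} \<Otimes>\<^sub>M uniform_measure lborel {0..1})"

definition base_space :: "('e \<times> int) set \<Rightarrow> ('e \<times> int \<Rightarrow> real \<times> real \<times> real) measure" where
  "base_space I = (\<Pi>\<^sub>M x\<in>I. mark_dist)"

definition gap :: "('i \<Rightarrow> real \<times> real \<times> real) \<Rightarrow> 'i \<Rightarrow> real" where
  "gap \<omega> x = fst (\<omega> x)"

definition Vmark :: "('i \<Rightarrow> real \<times> real \<times> real) \<Rightarrow> 'i \<Rightarrow> real" where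
  "Vmark \<omega> x = fst (snd (\<omega> x))"

definition Umark :: "('i \<Rightarrow> real \<times> real \<times> real) \<Rightarrow> 'i \<Rightarrow> real" where
  "Umark \<omega> x = snd (snd (\<omega> x))"

text \<open>The n-th event time of the Poisson process on edge e: for n \<ge> 1 the n-th point
  in (0,\<infinity>), for n \<le> 0 the (1-n)-th point in (-\<infinity>,0] counted backwards from 0.\<close>
definition evtime :: "('e \<times> int \<Rightarrow> real \<times> real \<times> real) \<Rightarrow> 'e \<times> int \<Rightarrow> real" where
  "evtime \<omega> x = (case x of (e, n) \<Rightarrow>
     if n \<ge> 1 then (\<Sum>m\<in>{1..n}. gap \<omega> (e, m)) else - (\<Sum>m\<in>{n..0}. gap \<omega> (e, m)))"

definition edge_index :: "('v \<times> 'v) set \<Rightarrow> (('v \<times> 'v) \<times> int) set" where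
  "edge_index E = E \<times> (UNIV :: int set)"

definition events_O :: "('v \<times> 'v) set \<Rightarrow> real \<Rightarrow> (('v \<times> 'v) \<times> int \<Rightarrow> real \<times> real \<times> real)
    \<Rightarrow> (('v \<times> 'v) \<times> int) set" where
  "events_O E s \<omega> = {x \<in> edge_index E. 0 < evtime \<omega> x \<and> evtime \<omega> x \<le> s}"

definition events_R :: "('v \<times> 'v) set \<Rightarrow> real \<Rightarrow> (('v \<times> 'v) \<times> int \<Rightarrow> real \<times> real \<times> real)
    \<Rightarrow> (('v \<times> 'v) \<times> int) set" where
  "events_R E s \<omega> = {x \<in> edge_index E. 0 \<le> evtime \<omega> x \<and> evtime \<omega> x \<le> s}"

text \<open>A finite event set listed in increasing time order (ties, a null event, broken arbitrarily).\<close>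
definition sorted_events :: "('i \<Rightarrow> real) \<Rightarrow> 'i set \<Rightarrow> 'i list"
  where
  "sorted_events tm A = (if finite A then
      (SOME xs. distinct xs \<and> set xs = A \<and> sorted_wrt (\<lambda>x y. tm x \<le> tm y) xs) else [])"

definition opinion_update :: "'v set \<Rightarrow> real \<Rightarrow> 'v \<times> 'v \<Rightarrow> ('v \<Rightarrow> real) \<Rightarrow> ('v \<Rightarrow> real)" where
  "opinion_update Vin V ij c = (case ij of (i, j) \<Rightarrow>
     (\<lambda>l. if l \<in> {i, j} \<inter> Vin then V * c i + (1 - V) * c j else c l))"

definition opinion :: "'v set \<Rightarrow> ('v \<times> 'v) set \<Rightarrow> ('v \<Rightarrow> real) \<Rightarrow> real
    \<Rightarrow> (('v \<times> 'v) \<times> int \<Rightarrow> real \<times> real \<times> real) \<Rightarrow> ('v \<Rightarrow> real)" where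
  "opinion Vin E O0 s \<omega> =
     foldl (\<lambda>c x. opinion_update Vin (Vmark \<omega> x) (fst x) c) O0
       (sorted_events (evtime \<omega>) (events_O E s \<omega>))"

text \<open>One backward step of the walk at an event on edge ij with marks V, U'
  (the tie U' = V is a null event and is resolved towards j).\<close>
definition walk_step :: "'v set \<Rightarrow> real \<Rightarrow> real \<Rightarrow> 'v \<times> 'v \<Rightarrow> 'v \<Rightarrow> 'v" where
  "walk_step Vin V U ij l = (case ij of (i, j) \<Rightarrow>
     if l = i \<or> l = j then (if l \<in> Vin then (if U < V then i else j) else j) else l)"

text \<open>R_{k,s}(0): start at k at time s and process the events of [0,s] from latest to earliest.\<close>
definition backward_walk :: "'v set \<Rightarrow> ('v \<times> 'v) set \<Rightarrow> real \<Rightarrow> 'v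
    \<Rightarrow> (('v \<times> 'v) \<times> int \<Rightarrow> real \<times> real \<times> real) \<Rightarrow> 'v" where
  "backward_walk Vin E s k \<omega> =
     foldr (\<lambda>x l. walk_step Vin (Vmark \<omega> x) (Umark \<omega> x) (fst x) l)
       (sorted_events (evtime \<omega>) (events_R E s \<omega>)) k"

definition NV_algebra :: "('v \<times> 'v) set \<Rightarrow> (('v \<times> 'v) \<times> int \<Rightarrow> real \<times> real \<times> real) measure" where
  "NV_algebra E = vimage_algebra (space (base_space (edge_index E)))
     (\<lambda>\<omega>. (\<lambda>x\<in>edge_index E. evtime \<omega> x, \<lambda>x\<in>edge_index E. Vmark \<omega> x))
     ((\<Pi>\<^sub>M x\<in>edge_index E. (borel :: real measure)) \<Otimes>\<^sub>M (\<Pi>\<^sub>M x\<in>edge_index E. (borel :: real measure)))"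

end

theory Submission
  imports Defs
begin

(* Conditionally on the Poisson clocks and the V-marks, the U'-marks are still independent
   uniform variables.  Hence a backward step of the walk through an event on an edge ij, taken
   from an internal endpoint, goes to i with conditional probability V and to j otherwise, which
   is exactly the convex combination V O_i + (1 - V) O_j performed by the opinion update at that
   event.  Removing the latest event of [0,s] and inducting over the remaining ones shows, for
   every fixed list of events, that integrating O0 at the endpoint of the walk against a bounded
   (N,V)-measurable weight gives the same result as integrating the opinion at time s.  The list
   of events in [0,s] is itself (N,V)-measurable and takes countably many values, so summing over
   these values identifies O_k(s) as the conditional expectation of O0 at the walk's endpoint. *)

section \<open>Bounded integrands\<close>

lemma abs_mult_le_mult:
  fixes a b A B :: "'a::linordered_idom"
  assumes "\<bar>a\<bar> \<le> A" "\<bar>b\<bar> \<le> B"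
  shows "\<bar>a * b\<bar> \<le> A * B"
  using mult_mono[OF assms] assms(1) by (simp add: abs_mult)

lemma abs_le_sum_abs:
  fixes c :: "'a \<Rightarrow> real"
  shows "finite S \<Longrightarrow> u \<in> S \<Longrightarrow> \<bar>c u\<bar> \<le> (\<Sum>v\<in>S. \<bar>c v\<bar>)"
  by (rule member_le_sum) auto

lemma (in prob_space) abs_integral_le_const:
  fixes f :: "'a \<Rightarrow> real"
  assumes "f \<in> borel_measurable M" "AE x in M. \<bar>f x\<bar> \<le> B"
  shows "\<bar>\<integral>x. f x \<partial>M\<bar> \<le> B"
proof -
  have "integrable M (\<lambda>x. \<bar>f x\<bar>)"
    using assms by (intro integrable_const_bound[where B=B]) auto
  then have "(\<integral>x. \<bar>f x\<bar> \<partial>M) \<le> B"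
    using assms(2) by (rule integral_le_const)
  then show ?thesis
    using integral_abs_bound[of M f] by linarith
qed

lemma (in prob_space) integral_plus_const_eq_sum_over_partition:
  fixes h :: "'a \<Rightarrow> real" and part :: "'a \<Rightarrow> 'b"
  assumes K: "countable K" and part: "part \<in> measurable M (count_space K)"
    and h [measurable]: "h \<in> borel_measurable M" and h_le: "AE x in M. \<bar>h x\<bar> \<le> C"
  shows "ennreal ((\<integral>x. h x \<partial>M) + C) =
    (\<integral>\<^sup>+L. ennreal ((\<integral>x. indicator (part -` {L} \<inter> space M) x * h x \<partial>M) +
      C * measure M (part -` {L} \<inter> space M)) \<partial>count_space K)"
proof -
  define B where "B L = part -` {L} \<inter> space M" for L
  have [measurable]: "B L \<in> sets M" for L
  proof -
    have "B L = part -` ({L} \<inter> K) \<inter> space M"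
      using measurable_space[OF part] by (auto simp: B_def)
    then show ?thesis
      using measurable_sets[OF part, of "{L} \<inter> K"] by simp
  qed
  have nonneg: "AE x in M. 0 \<le> indicator A x * (h x + C)" for A
    using h_le by eventually_elim (simp split: split_indicator)
  have integrable: "integrable M (\<lambda>x. indicator A x * h x)" if "A \<in> sets M" for A
  proof (rule integrable_const_bound)
    show "AE x in M. norm (indicator A x * h x) \<le> C"
      using h_le by eventually_elim (auto split: split_indicator dest: order_trans[OF abs_ge_zero])
  qed (use that in measurable)
  have integrable_shifted: "integrable M (\<lambda>x. indicator A x * (h x + C))" if "A \<in> sets M" for A
  proof (rule integrable_const_bound)
    show "AE x in M. norm (indicator A x * (h x + C)) \<le> 2 * C"
      using h_le by eventually_elim (auto split: split_indicator dest: order_trans[OF abs_ge_zero])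
  qed (use that in measurable)
  have integral_piece: "(\<integral>x. indicator A x * (h x + C) \<partial>M) = (\<integral>x. indicator A x * h x \<partial>M) + C * measure M A"
    if "A \<in> sets M" for A
  proof -
    have "integrable M (\<lambda>x. C * indicator A x)"
      using that by (intro Bochner_Integration.integrable_mult_right integrable_real_indicator)
        (auto simp: emeasure_eq_measure)
    then show ?thesis
      using integrable[OF that] that by (simp add: distrib_left mult.commute[of _ C])
  qed
  have "integrable M h"
    using h_le by (intro integrable_const_bound[where B=C]) auto
  moreover have "AE x in M. 0 \<le> h x + C"
    using h_le by eventually_elim simp
  ultimately have "ennreal ((\<integral>x. h x \<partial>M) + C) = (\<integral>\<^sup>+x. ennreal (h x + C) \<partial>M)"
    by (simp add: nn_integral_eq_integral prob_space)
  also have "\<dots> = (\<integral>\<^sup>+x. (\<integral>\<^sup>+L. ennreal (indicator (B L) x * (h x + C)) \<partial>count_space K) \<partial>M)"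
  proof (rule nn_integral_cong)
    fix x assume x: "x \<in> space M"
    then have "(\<lambda>L. ennreal (indicator (B L) x * (h x + C))) = (\<lambda>L. ennreal (h x + C) * indicator {part x} L)"
      by (auto simp: B_def fun_eq_iff split: split_indicator)
    with x measurable_space[OF part x] show "ennreal (h x + C) =
        (\<integral>\<^sup>+L. ennreal (indicator (B L) x * (h x + C)) \<partial>count_space K)"
      by simp
  qed
  also have "\<dots> = (\<integral>\<^sup>+L. (\<integral>\<^sup>+x. ennreal (indicator (B L) x * (h x + C)) \<partial>M) \<partial>count_space K)"
    by (rule nn_integral_count_space_nn_integral[OF K]) measurable
  also have "\<dots> = (\<integral>\<^sup>+L. ennreal ((\<integral>x. indicator (B L) x * h x \<partial>M) + C * measure M (B L)) \<partial>count_space K)"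
    using integrable_shifted nonneg integral_piece by (intro nn_integral_cong) (simp add: nn_integral_eq_integral)
  finally show ?thesis
    unfolding B_def .
qed

lemma (in prob_space) integral_eq_by_countable_partition:
  fixes f g :: "'a \<Rightarrow> real" and part :: "'a \<Rightarrow> 'b"
  assumes "countable K" and "part \<in> measurable M (count_space K)"
    and f: "f \<in> borel_measurable M" "AE x in M. \<bar>f x\<bar> \<le> C"
    and g: "g \<in> borel_measurable M" "AE x in M. \<bar>g x\<bar> \<le> C"
    and pieces: "\<And>L. L \<in> K \<Longrightarrow> (\<integral>x. indicator (part -` {L} \<inter> space M) x * f x \<partial>M) =
      (\<integral>x. indicator (part -` {L} \<inter> space M) x * g x \<partial>M)"
  shows "(\<integral>x. f x \<partial>M) = (\<integral>x. g x \<partial>M)"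
proof -
  have "ennreal ((\<integral>x. f x \<partial>M) + C) = ennreal ((\<integral>x. g x \<partial>M) + C)"
    unfolding integral_plus_const_eq_sum_over_partition[OF assms(1,2) f]
      integral_plus_const_eq_sum_over_partition[OF assms(1,2) g]
    using pieces by (intro nn_integral_cong) simp
  moreover have "0 \<le> (\<integral>x. f x \<partial>M) + C" "0 \<le> (\<integral>x. g x \<partial>M) + C"
    using abs_integral_le_const[OF f] abs_integral_le_const[OF g] by linarith+
  ultimately show ?thesis
    by simp
qed

section \<open>The mark distribution\<close>

definition exp_dist :: "real measure" where
  "exp_dist = density lborel (exponential_density 1)"

definition unif_dist :: "real measure" where
  "unif_dist = uniform_measure lborel {0..1}"

lemma mark_dist_eq: "mark_dist = exp_dist \<Otimes>\<^sub>M (unif_dist \<Otimes>\<^sub>M unif_dist)"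
  unfolding mark_dist_def exp_dist_def unif_dist_def ..

lemma prob_space_exp_dist: "prob_space exp_dist"
  unfolding exp_dist_def by (simp add: prob_space_exponential_density)

lemma prob_space_unif_dist: "prob_space unif_dist"
  unfolding unif_dist_def by (intro prob_space_uniform_measure) auto

lemma sets_exp_dist [measurable_cong, simp]: "sets exp_dist = sets borel"
  and space_exp_dist [simp]: "space exp_dist = UNIV"
  by (simp_all add: exp_dist_def)

lemma sets_unif_dist [measurable_cong, simp]: "sets unif_dist = sets borel"
  and space_unif_dist [simp]: "space unif_dist = UNIV"
  by (simp_all add: unif_dist_def)

lemma sets_mark_dist [measurable_cong]:
  "sets mark_dist = sets (borel \<Otimes>\<^sub>M (borel \<Otimes>\<^sub>M (borel :: real measure)))"
  unfolding mark_dist_eq by (intro sets_pair_measure_cong) auto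

lemma space_mark_dist [simp]: "space mark_dist = UNIV"
  by (simp add: mark_dist_eq space_pair_measure)

lemma prob_space_mark_dist: "prob_space mark_dist"
  unfolding mark_dist_eq
  by (intro prob_space_pair prob_space_exp_dist prob_space_unif_dist)

lemma prob_space_base_space: "prob_space (base_space I)"
  unfolding base_space_def by (intro prob_space_PiM prob_space_mark_dist)

lemma measurable_base_space_component [measurable]:
  "x \<in> I \<Longrightarrow> (\<lambda>w. w x) \<in> measurable (base_space I) (borel \<Otimes>\<^sub>M (borel \<Otimes>\<^sub>M (borel :: real measure)))"
  unfolding base_space_def
  using measurable_component_singleton[of x I "\<lambda>_. mark_dist"]
  by (simp add: measurable_cong_sets[OF refl sets_mark_dist])

lemma measurable_gap [measurable]: "x \<in> I \<Longrightarrow> (\<lambda>w. gap w x) \<in> borel_measurable (base_space I)"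
  and measurable_Vmark [measurable]: "x \<in> I \<Longrightarrow> (\<lambda>w. Vmark w x) \<in> borel_measurable (base_space I)"
  and measurable_Umark [measurable]: "x \<in> I \<Longrightarrow> (\<lambda>w. Umark w x) \<in> borel_measurable (base_space I)"
  unfolding gap_def Vmark_def Umark_def by measurable

lemma measurable_evtime [measurable]:
  "x \<in> edge_index E \<Longrightarrow> (\<lambda>w. evtime w x) \<in> borel_measurable (base_space (edge_index E))"
  unfolding evtime_def by (cases x) (simp add: edge_index_def)

lemma AE_exp_dist_pos: "AE a in exp_dist. 0 < a"
proof -
  have "AE a in lborel. (a::real) \<noteq> 0" by (rule AE_lborel_singleton)
  then have "AE a in lborel. 0 < ennreal (exponential_density 1 a) \<longrightarrow> 0 < a"
    by eventually_elim (auto simp: exponential_density_def)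
  then show ?thesis unfolding exp_dist_def by (subst AE_density) auto
qed

lemma AE_mark_dist_range: "AE m in mark_dist. 0 < fst m \<and> 0 \<le> fst (snd m) \<and> fst (snd m) \<le> 1"
proof -
  interpret U: prob_space unif_dist by (rule prob_space_unif_dist)
  interpret UU: pair_sigma_finite unif_dist unif_dist ..
  interpret E: prob_space exp_dist by (rule prob_space_exp_dist)
  interpret UU': prob_space "unif_dist \<Otimes>\<^sub>M unif_dist" by (intro prob_space_pair U.prob_space_axioms)
  interpret P: pair_sigma_finite exp_dist "unif_dist \<Otimes>\<^sub>M unif_dist" ..
  have "AE v in unif_dist. 0 \<le> v \<and> v \<le> 1"
    unfolding unif_dist_def by (subst AE_uniform_measure) auto
  then have "AE v in unif_dist. AE u in unif_dist. 0 \<le> fst (v, u) \<and> fst (v, u) \<le> 1"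
    by eventually_elim simp
  then have V: "AE p in unif_dist \<Otimes>\<^sub>M unif_dist. 0 \<le> fst p \<and> fst p \<le> 1"
    by (rule UU.AE_pair_measure[rotated]) measurable
  have "AE a in exp_dist. AE p in unif_dist \<Otimes>\<^sub>M unif_dist. 0 < fst (a, p) \<and> 0 \<le> fst (snd (a, p)) \<and> fst (snd (a, p)) \<le> 1"
    using AE_exp_dist_pos by eventually_elim (use V in \<open>auto elim: AE_mp\<close>)
  then show ?thesis
    unfolding mark_dist_eq by (rule P.AE_pair_measure[rotated]) measurable
qed

lemma AE_marks_in_range:
  assumes "countable J" "J \<subseteq> I"
  shows "AE w in base_space I. \<forall>x\<in>J. 0 < gap w x \<and> 0 \<le> Vmark w x \<and> Vmark w x \<le> 1"
proof (rule AE_ball_countable'[OF _ assms(1)])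
  fix x assume "x \<in> J"
  with assms(2) AE_PiM_component[OF prob_space_mark_dist _ AE_mark_dist_range, of x I]
  show "AE w in base_space I. 0 < gap w x \<and> 0 \<le> Vmark w x \<and> Vmark w x \<le> 1"
    unfolding base_space_def gap_def Vmark_def by auto
qed

section \<open>Averaging out a U'-mark\<close>

definition set_Umark :: "('i \<Rightarrow> real \<times> real \<times> real) \<Rightarrow> 'i \<Rightarrow> real \<Rightarrow> 'i \<Rightarrow> real \<times> real \<times> real" where
  "set_Umark w x u = w(x := (gap w x, Vmark w x, u))"

lemma gap_set_Umark [simp]: "gap (set_Umark w x u) = gap w"
  and Vmark_set_Umark [simp]: "Vmark (set_Umark w x u) = Vmark w"
  by (auto simp: fun_eq_iff set_Umark_def gap_def Vmark_def)

lemma evtime_set_Umark [simp]: "evtime (set_Umark w x u) = evtime w"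
  by (simp add: fun_eq_iff evtime_def)

lemma base_space_fun_upd:
  assumes "x \<in> I"
  shows "distr (mark_dist \<Otimes>\<^sub>M (\<Pi>\<^sub>M i\<in>I-{x}. mark_dist)) (base_space I) (\<lambda>(m, X). X(x := m)) = base_space I"
    and "(\<lambda>(m, X). X(x := m)) \<in> measurable (mark_dist \<Otimes>\<^sub>M (\<Pi>\<^sub>M i\<in>I-{x}. mark_dist)) (base_space I)"
proof -
  have I: "insert x (I - {x}) = I" using assms by auto
  show "distr (mark_dist \<Otimes>\<^sub>M (\<Pi>\<^sub>M i\<in>I-{x}. mark_dist)) (base_space I) (\<lambda>(m, X). X(x := m)) = base_space I"
    using distr_pair_PiM_eq_PiM[of "I-{x}" "\<lambda>_. mark_dist" x] prob_space_mark_dist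
    unfolding base_space_def I by simp
  have "(\<lambda>(m, X). (X, m)) \<in> measurable (mark_dist \<Otimes>\<^sub>M (\<Pi>\<^sub>M i\<in>I-{x}. mark_dist))
      ((\<Pi>\<^sub>M i\<in>I-{x}. mark_dist) \<Otimes>\<^sub>M mark_dist)"
    by measurable
  from measurable_compose[OF this measurable_add_dim[of x "I-{x}" "\<lambda>_. mark_dist"]]
  show "(\<lambda>(m, X). X(x := m)) \<in> measurable (mark_dist \<Otimes>\<^sub>M (\<Pi>\<^sub>M i\<in>I-{x}. mark_dist)) (base_space I)"
    unfolding base_space_def I by (simp add: case_prod_beta)
qed

lemma integral_base_space_split:
  fixes h :: "('e \<times> int \<Rightarrow> real \<times> real \<times> real) \<Rightarrow> real"
  assumes "x \<in> I" and h: "integrable (base_space I) h"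
  shows "(\<integral>w. h w \<partial>base_space I) =
    (\<integral>X. (\<integral>m. h (X(x := m)) \<partial>mark_dist) \<partial>(\<Pi>\<^sub>M i\<in>I-{x}. mark_dist))"
proof -
  let ?P = "\<Pi>\<^sub>M i\<in>I-{x}. mark_dist"
  interpret mark: prob_space mark_dist by (rule prob_space_mark_dist)
  interpret P: prob_space ?P by (intro prob_space_PiM prob_space_mark_dist)
  interpret pair_sigma_finite mark_dist ?P ..
  note distr = base_space_fun_upd[OF \<open>x \<in> I\<close>]
  have "integrable (mark_dist \<Otimes>\<^sub>M ?P) (\<lambda>(m, X). h (X(x := m)))"
    using h integrable_distr_eq[OF distr(2) borel_measurable_integrable[OF h]]
    unfolding distr(1) by (simp add: case_prod_unfold)
  moreover have "(\<integral>w. h w \<partial>base_space I) = (\<integral>p. (\<lambda>(m, X). h (X(x := m))) p \<partial>(mark_dist \<Otimes>\<^sub>M ?P))"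
    using integral_distr[OF distr(2) borel_measurable_integrable[OF h]]
    unfolding distr(1) by (simp add: case_prod_beta)
  ultimately show ?thesis
    using integral_snd[of "\<lambda>m X. h (X(x := m))"] by simp
qed

lemma integral_unif_dist_less: "(\<integral>u. of_bool (u < v) \<partial>unif_dist) = min 1 (max 0 v)"
proof -
  interpret prob_space unif_dist by (rule prob_space_unif_dist)
  have "(\<integral>u. of_bool (u < v) \<partial>unif_dist) = (\<integral>u. indicator {..<v} u \<partial>unif_dist)"
    by (simp add: indicator_def)
  also have "\<dots> = measure unif_dist {..<v}"
    by simp
  also have "\<dots> = measure lborel ({0..1} \<inter> {..<v})"
    unfolding unif_dist_def by (subst measure_uniform_measure) auto
  also have "\<dots> = min 1 (max 0 v)"
  proof -
    consider "v \<le> 0" | "0 < v" "v \<le> 1" | "1 < v" by linarith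
    then show ?thesis
    proof cases
      case 1
      then have "{0..1} \<inter> {..<v} = ({} :: real set)" by auto
      with 1 show ?thesis by simp
    next
      case 2
      then have "{0..1} \<inter> {..<v} = {0..<v}" by auto
      with 2 show ?thesis by simp
    next
      case 3
      then have "{0..1} \<inter> {..<v} = {0..1}" by auto
      with 3 show ?thesis by simp
    qed
  qed
  finally show ?thesis .
qed

lemma integral_mark_dist_Umark:
  fixes K :: "real \<times> real \<times> real \<Rightarrow> real"
  assumes K: "K \<in> borel_measurable (borel \<Otimes>\<^sub>M (borel \<Otimes>\<^sub>M borel))" and bounded: "\<And>m. \<bar>K m\<bar> \<le> B"
  shows "(\<integral>m. K m \<partial>mark_dist) = (\<integral>m. (\<integral>u. K (fst m, fst (snd m), u) \<partial>unif_dist) \<partial>mark_dist)"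
proof -
  interpret U: prob_space unif_dist by (rule prob_space_unif_dist)
  interpret UU: prob_space "unif_dist \<Otimes>\<^sub>M unif_dist" by (intro prob_space_pair U.prob_space_axioms)
  interpret P: prob_space "exp_dist \<Otimes>\<^sub>M (unif_dist \<Otimes>\<^sub>M unif_dist)"
    using prob_space_exp_dist by (intro prob_space_pair UU.prob_space_axioms)
  interpret E: prob_space exp_dist by (rule prob_space_exp_dist)
  interpret EP: pair_sigma_finite exp_dist "unif_dist \<Otimes>\<^sub>M unif_dist" ..
  interpret UP: pair_sigma_finite unif_dist unif_dist ..
  define R where "R m = (\<integral>u. K (fst m, fst (snd m), u) \<partial>unif_dist)" for m :: "real \<times> real \<times> real"
  have [measurable]: "K \<in> borel_measurable (exp_dist \<Otimes>\<^sub>M (unif_dist \<Otimes>\<^sub>M unif_dist))"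
    using K by (simp add: measurable_cong_sets[OF sets_pair_measure_cong[OF sets_exp_dist
          sets_pair_measure_cong[OF sets_unif_dist sets_unif_dist]] refl])
  then have [measurable]: "R \<in> borel_measurable (exp_dist \<Otimes>\<^sub>M (unif_dist \<Otimes>\<^sub>M unif_dist))"
    unfolding R_def by measurable
  have R_bounded: "\<bar>R m\<bar> \<le> B" for m
    unfolding R_def using bounded by (intro U.abs_integral_le_const) auto
  have integrable_section: "integrable (unif_dist \<Otimes>\<^sub>M unif_dist) (\<lambda>p. F (a, p))"
    if "F \<in> borel_measurable (exp_dist \<Otimes>\<^sub>M (unif_dist \<Otimes>\<^sub>M unif_dist))" "\<And>m. \<bar>F m\<bar> \<le> B" for F a
    using that by (intro UU.integrable_const_bound[where B=B]) auto
  have integrable: "integrable (exp_dist \<Otimes>\<^sub>M (unif_dist \<Otimes>\<^sub>M unif_dist)) F"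
    if "F \<in> borel_measurable (exp_dist \<Otimes>\<^sub>M (unif_dist \<Otimes>\<^sub>M unif_dist))" "\<And>m. \<bar>F m\<bar> \<le> B" for F
    using that by (intro P.integrable_const_bound[where B=B]) auto
  have section_eq: "(\<integral>p. K (a, p) \<partial>(unif_dist \<Otimes>\<^sub>M unif_dist)) = (\<integral>p. R (a, p) \<partial>(unif_dist \<Otimes>\<^sub>M unif_dist))" for a
  proof -
    have "(\<integral>p. K (a, p) \<partial>(unif_dist \<Otimes>\<^sub>M unif_dist)) = (\<integral>v. (\<integral>u. K (a, v, u) \<partial>unif_dist) \<partial>unif_dist)"
      using UP.integral_fst'[OF integrable_section[of K a]] bounded by simp
    also have "\<dots> = (\<integral>v. (\<integral>u. R (a, v, u) \<partial>unif_dist) \<partial>unif_dist)"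
      using U.prob_space by (simp add: R_def)
    also have "\<dots> = (\<integral>p. R (a, p) \<partial>(unif_dist \<Otimes>\<^sub>M unif_dist))"
      using UP.integral_fst'[OF integrable_section[of R a]] R_bounded by simp
    finally show ?thesis .
  qed
  have "(\<integral>m. K m \<partial>mark_dist) = (\<integral>a. (\<integral>p. K (a, p) \<partial>(unif_dist \<Otimes>\<^sub>M unif_dist)) \<partial>exp_dist)"
    unfolding mark_dist_eq using EP.integral_fst'[OF integrable[of K]] bounded by simp
  also have "\<dots> = (\<integral>a. (\<integral>p. R (a, p) \<partial>(unif_dist \<Otimes>\<^sub>M unif_dist)) \<partial>exp_dist)"
    by (simp only: section_eq)
  also have "\<dots> = (\<integral>m. R m \<partial>mark_dist)"
    unfolding mark_dist_eq using EP.integral_fst'[OF integrable[of R]] R_bounded by simp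
  finally show ?thesis unfolding R_def .
qed

lemma integral_mark_dist_Umark_less_Vmark:
  fixes \<psi> :: "real \<Rightarrow> real \<Rightarrow> real"
  assumes [measurable]: "(\<lambda>m. \<psi> (fst m) (fst (snd m))) \<in> borel_measurable (borel \<Otimes>\<^sub>M (borel \<Otimes>\<^sub>M (borel :: real measure)))"
    and "\<And>a v. \<bar>\<psi> a v\<bar> \<le> B"
  shows "(\<integral>m. \<psi> (fst m) (fst (snd m)) * of_bool (snd (snd m) < fst (snd m)) \<partial>mark_dist) =
    (\<integral>m. \<psi> (fst m) (fst (snd m)) * min 1 (max 0 (fst (snd m))) \<partial>mark_dist)"
proof -
  define K where "K m = \<psi> (fst m) (fst (snd m)) * of_bool (snd (snd m) < fst (snd m))" for m
  have "K \<in> borel_measurable (borel \<Otimes>\<^sub>M (borel \<Otimes>\<^sub>M borel))"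
    unfolding K_def by measurable
  moreover have "\<bar>K m\<bar> \<le> B" for m
    using assms(2)[of "fst m" "fst (snd m)"]
    by (auto simp: K_def abs_mult dest: order_trans[OF abs_ge_zero])
  ultimately have "(\<integral>m. K m \<partial>mark_dist) = (\<integral>m. (\<integral>u. K (fst m, fst (snd m), u) \<partial>unif_dist) \<partial>mark_dist)"
    by (rule integral_mark_dist_Umark)
  then show ?thesis
    by (simp add: K_def integral_unif_dist_less)
qed

lemma integral_Umark_less_Vmark:
  fixes \<phi> :: "('e \<times> int \<Rightarrow> real \<times> real \<times> real) \<Rightarrow> real"
  assumes x: "x \<in> I" and \<phi>: "\<phi> \<in> borel_measurable (base_space I)" "\<And>w. \<bar>\<phi> w\<bar> \<le> B"
    and invariant: "\<And>w u. w \<in> space (base_space I) \<Longrightarrow> \<phi> (set_Umark w x u) = \<phi> w"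
  shows "(\<integral>w. \<phi> w * of_bool (Umark w x < Vmark w x) \<partial>base_space I) =
    (\<integral>w. \<phi> w * min 1 (max 0 (Vmark w x)) \<partial>base_space I)"
proof -
  interpret prob_space "base_space I" by (rule prob_space_base_space)
  let ?P = "\<Pi>\<^sub>M i\<in>I-{x}. mark_dist"
  note fun_upd = base_space_fun_upd[OF x]
  have inner: "(\<integral>m. \<phi> (X(x := m)) * of_bool (Umark (X(x := m)) x < Vmark (X(x := m)) x) \<partial>mark_dist) =
      (\<integral>m. \<phi> (X(x := m)) * min 1 (max 0 (Vmark (X(x := m)) x)) \<partial>mark_dist)"
    if X: "X \<in> space ?P" for X
  proof -
    define \<psi> where "\<psi> a v = \<phi> (X(x := (a, v, 0)))" for a v
    have "X(x := m) \<in> space (base_space I)" for m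
      using measurable_space[OF fun_upd(2), of "(m, X)"] X by (simp add: space_pair_measure)
    from invariant[OF this, of _ 0]
    have \<phi>_upd: "\<phi> (X(x := m)) = \<psi> (fst m) (fst (snd m))" for m
      by (simp add: \<psi>_def set_Umark_def gap_def Vmark_def)
    have "(\<lambda>m. ((fst m, fst (snd m), 0), X)) \<in> measurable (borel \<Otimes>\<^sub>M (borel \<Otimes>\<^sub>M (borel :: real measure))) (mark_dist \<Otimes>\<^sub>M ?P)"
      using X by (simp add: measurable_cong_sets[OF refl sets_pair_measure_cong[OF sets_mark_dist refl]])
    from measurable_compose[OF measurable_compose[OF this fun_upd(2)] \<phi>(1)]
    have "(\<lambda>m. \<psi> (fst m) (fst (snd m))) \<in> borel_measurable (borel \<Otimes>\<^sub>M (borel \<Otimes>\<^sub>M (borel :: real measure)))"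
      by (simp add: \<psi>_def)
    moreover have "\<bar>\<psi> a v\<bar> \<le> B" for a v
      unfolding \<psi>_def by (rule \<phi>(2))
    ultimately have "(\<integral>m. \<psi> (fst m) (fst (snd m)) * of_bool (snd (snd m) < fst (snd m)) \<partial>mark_dist) =
        (\<integral>m. \<psi> (fst m) (fst (snd m)) * min 1 (max 0 (fst (snd m))) \<partial>mark_dist)"
      by (rule integral_mark_dist_Umark_less_Vmark)
    then show ?thesis
      by (simp add: \<phi>_upd Umark_def Vmark_def)
  qed
  have integrable: "integrable (base_space I) (\<lambda>w. \<phi> w * g w)"
    if "g \<in> borel_measurable (base_space I)" "\<And>w. \<bar>g w\<bar> \<le> 1" for g
    using that \<phi> abs_mult_le_mult[OF \<phi>(2) that(2)]
    by (intro integrable_const_bound[where B=B] AE_I2) auto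
  show ?thesis
    using x by (simp add: integral_base_space_split[OF x integrable] inner cong: Bochner_Integration.integral_cong)
qed

lemma integral_if_Umark_less_Vmark:
  fixes H f g :: "('e \<times> int \<Rightarrow> real \<times> real \<times> real) \<Rightarrow> real"
  assumes x: "x \<in> I"
    and [measurable]: "H \<in> borel_measurable (base_space I)" "f \<in> borel_measurable (base_space I)"
      "g \<in> borel_measurable (base_space I)"
    and bounded: "\<And>w. \<bar>H w\<bar> \<le> B" "\<And>w. \<bar>f w\<bar> \<le> C" "\<And>w. \<bar>g w\<bar> \<le> C"
    and invariant: "\<And>w u. w \<in> space (base_space I) \<Longrightarrow>
      H (set_Umark w x u) = H w \<and> f (set_Umark w x u) = f w \<and> g (set_Umark w x u) = g w"
  shows "(\<integral>w. H w * (if Umark w x < Vmark w x then f w else g w) \<partial>base_space I) =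
    (\<integral>w. H w * min 1 (max 0 (Vmark w x)) * f w \<partial>base_space I) +
    (\<integral>w. H w * (1 - min 1 (max 0 (Vmark w x))) * g w \<partial>base_space I)"
proof -
  interpret prob_space "base_space I" by (rule prob_space_base_space)
  define p where "p w = min 1 (max 0 (Vmark w x))" for w
  have [measurable]: "p \<in> borel_measurable (base_space I)"
    unfolding p_def using x by measurable
  have integrable: "integrable (base_space I) (\<lambda>w. H w * X w)"
    if "X \<in> borel_measurable (base_space I)" "\<And>w. \<bar>X w\<bar> \<le> 2 * C" for X
    using that abs_mult_le_mult[OF bounded(1) that(2)]
    by (intro integrable_const_bound[where B="B * (2 * C)"] AE_I2) auto
  have le: "\<bar>g w\<bar> \<le> 2 * C" "\<bar>p w * f w\<bar> \<le> 2 * C" "\<bar>(1 - p w) * g w\<bar> \<le> 2 * C"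
    "\<bar>(f w - g w) * p w\<bar> \<le> 2 * C" "\<bar>(f w - g w) * of_bool (Umark w x < Vmark w x)\<bar> \<le> 2 * C" for w
  proof -
    have "0 \<le> p w" "p w \<le> 1" "\<bar>f w - g w\<bar> \<le> 2 * C"
      using bounded(2,3)[of w] by (auto simp: p_def)
    then show "\<bar>g w\<bar> \<le> 2 * C" "\<bar>p w * f w\<bar> \<le> 2 * C" "\<bar>(1 - p w) * g w\<bar> \<le> 2 * C"
      "\<bar>(f w - g w) * p w\<bar> \<le> 2 * C" "\<bar>(f w - g w) * of_bool (Umark w x < Vmark w x)\<bar> \<le> 2 * C"
      using bounded(2,3)[of w] abs_mult_le_mult[of "p w" 1 "f w" C] abs_mult_le_mult[of "1 - p w" 1 "g w" C]
        abs_mult_le_mult[of "f w - g w" "2 * C" "p w" 1]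
      by (auto simp: abs_mult)
  qed
  have "(\<integral>w. H w * (if Umark w x < Vmark w x then f w else g w) \<partial>base_space I) =
      (\<integral>w. H w * g w + H w * ((f w - g w) * of_bool (Umark w x < Vmark w x)) \<partial>base_space I)"
    by (intro Bochner_Integration.integral_cong) (auto simp: algebra_simps)
  also have "\<dots> = (\<integral>w. H w * g w \<partial>base_space I) + (\<integral>w. H w * ((f w - g w) * p w) \<partial>base_space I)"
  proof -
    have "(\<integral>w. H w * (f w - g w) * of_bool (Umark w x < Vmark w x) \<partial>base_space I) =
        (\<integral>w. H w * (f w - g w) * p w \<partial>base_space I)"
    proof (unfold p_def, rule integral_Umark_less_Vmark[OF x])
      show "\<bar>H w * (f w - g w)\<bar> \<le> B * (2 * C)" for w
        using bounded(2,3)[of w] by (intro abs_mult_le_mult[OF bounded(1)]) linarith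
    qed (use invariant in auto)
    then show ?thesis
      using x le by (simp add: integrable mult.assoc)
  qed
  also have "\<dots> = (\<integral>w. H w * g w + H w * ((f w - g w) * p w) \<partial>base_space I)"
    using x le by (intro Bochner_Integration.integral_add[symmetric] integrable) auto
  also have "\<dots> = (\<integral>w. H w * (p w * f w) + H w * ((1 - p w) * g w) \<partial>base_space I)"
    by (intro Bochner_Integration.integral_cong) (auto simp: algebra_simps)
  also have "\<dots> = (\<integral>w. H w * p w * f w \<partial>base_space I) + (\<integral>w. H w * (1 - p w) * g w \<partial>base_space I)"
    using x le by (simp add: integrable mult.assoc)
  finally show ?thesis
    unfolding p_def .
qed

section \<open>Walks and opinions along a fixed list of events\<close>

definition walk_along :: "'v set \<Rightarrow> (('v \<times> 'v) \<times> 'n) list \<Rightarrow> (('v \<times> 'v) \<times> 'n \<Rightarrow> real \<times> real \<times> real) \<Rightarrow> 'v \<Rightarrow> 'v"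
  where "walk_along Vin L w k = foldr (\<lambda>x l. walk_step Vin (Vmark w x) (Umark w x) (fst x) l) L k"

definition opinion_along :: "'v set \<Rightarrow> (('v \<times> 'v) \<times> 'n) list \<Rightarrow> (('v \<times> 'v) \<times> 'n \<Rightarrow> real \<times> real \<times> real)
    \<Rightarrow> ('v \<Rightarrow> real) \<Rightarrow> 'v \<Rightarrow> real"
  where "opinion_along Vin L w c = foldl (\<lambda>c x. opinion_update Vin (Vmark w x) (fst x) c) c L"

lemma walk_along_simps [simp]:
  "walk_along Vin [] w k = k"
  "walk_along Vin (x # L) w k = walk_step Vin (Vmark w x) (Umark w x) (fst x) (walk_along Vin L w k)"
  "walk_along Vin (L @ [x]) w k = walk_along Vin L w (walk_step Vin (Vmark w x) (Umark w x) (fst x) k)"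
  by (simp_all add: walk_along_def)

lemma opinion_along_simps [simp]:
  "opinion_along Vin [] w c = c"
  "opinion_along Vin (L @ [x]) w c = opinion_update Vin (Vmark w x) (fst x) (opinion_along Vin L w c)"
  by (simp_all add: opinion_along_def)

lemma walk_along_set_Umark [simp]:
  "y \<notin> set L \<Longrightarrow> walk_along Vin L (set_Umark w y u) k = walk_along Vin L w k"
  by (induction L) (auto simp: set_Umark_def Umark_def Vmark_def)

lemma walk_along_in:
  assumes "fst ` set L \<subseteq> S \<times> S" "k \<in> S"
  shows "walk_along Vin L w k \<in> S"
  using assms by (induction L) (auto simp: walk_step_def split: prod.splits)

lemma abs_opinion_along_le:
  assumes "\<forall>x\<in>set L. 0 \<le> Vmark w x \<and> Vmark w x \<le> 1" "fst ` set L \<subseteq> S \<times> S"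
    and "\<forall>u\<in>S. \<bar>c u\<bar> \<le> B" "v \<in> S"
  shows "\<bar>opinion_along Vin L w c v\<bar> \<le> B"
  using assms(1,2,4)
proof (induction L arbitrary: v rule: rev_induct)
  case Nil
  then show ?case using assms(3) by simp
next
  case (snoc y L)
  obtain i j where y: "fst y = (i, j)" by fastforce
  let ?V = "Vmark w y" and ?O = "opinion_along Vin L w c"
  have V: "0 \<le> ?V" "?V \<le> 1"
    using snoc.prems(1) by simp_all
  have "fst y \<in> S \<times> S"
    using snoc.prems(2) by simp
  then have ij: "i \<in> S" "j \<in> S"
    using y by auto
  have IH: "\<bar>?O u\<bar> \<le> B" if "u \<in> S" for u
    using snoc that by auto
  have "\<bar>?V * ?O i + (1 - ?V) * ?O j\<bar> \<le> ?V * \<bar>?O i\<bar> + (1 - ?V) * \<bar>?O j\<bar>"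
    using V abs_triangle_ineq[of "?V * ?O i" "(1 - ?V) * ?O j"] by (simp add: abs_mult)
  also have "\<dots> \<le> ?V * B + (1 - ?V) * B"
    using V IH ij by (intro add_mono mult_left_mono) auto
  finally show ?case
    using IH snoc.prems by (auto simp: y opinion_update_def algebra_simps)
qed

lemma measurable_walk_along:
  assumes "\<And>x. x \<in> set L \<Longrightarrow> (\<lambda>w. Vmark w x) \<in> borel_measurable N"
    and "\<And>x. x \<in> set L \<Longrightarrow> (\<lambda>w. Umark w x) \<in> borel_measurable N"
  shows "(\<lambda>w. walk_along Vin L w k) \<in> measurable N (count_space UNIV)"
  using assms
proof (induction L)
  case (Cons x L)
  then have [measurable]: "(\<lambda>w. walk_along Vin L w k) \<in> measurable N (count_space UNIV)"
    "(\<lambda>w. Vmark w x) \<in> borel_measurable N" "(\<lambda>w. Umark w x) \<in> borel_measurable N"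
    by auto
  have walk_in [measurable]: "Measurable.pred N (\<lambda>w. walk_along Vin L w k \<in> A)" for A
    using measurable_sets[of "\<lambda>w. walk_along Vin L w k" N "count_space UNIV" A]
    by (simp add: pred_def vimage_def Int_def conj_commute)
  have [measurable]: "Measurable.pred N (\<lambda>w. walk_along Vin L w k = a)" for a
    using walk_in[of "{a}"] by simp
  obtain i j where "fst x = (i, j)" by fastforce
  then show ?case
    by (simp add: walk_step_def)
qed simp

lemma measurable_opinion_along [measurable]:
  assumes "\<And>x. x \<in> set L \<Longrightarrow> (\<lambda>w. Vmark w x) \<in> borel_measurable N"
  shows "(\<lambda>w. opinion_along Vin L w c v) \<in> borel_measurable N"
  using assms
proof (induction L arbitrary: v rule: rev_induct)
  case (snoc y L)
  then have [measurable]: "(\<lambda>w. opinion_along Vin L w c u) \<in> borel_measurable N"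
    "(\<lambda>w. Vmark w y) \<in> borel_measurable N" for u
    by auto
  obtain i j where "fst y = (i, j)" by fastforce
  then show ?case
    by (simp add: opinion_update_def)
qed simp

lemma integral_walk_along_snoc:
  fixes H :: "(('v \<times> 'v) \<times> int \<Rightarrow> real \<times> real \<times> real) \<Rightarrow> real" and c :: "'v \<Rightarrow> real"
  assumes y: "y \<in> I" "y \<notin> set xs" "fst y = (i, j)" and k: "k \<in> {i, j} \<inter> Vin"
    and xs: "set xs \<subseteq> I" "fst ` set xs \<subseteq> S \<times> S" "finite S" "i \<in> S" "j \<in> S"
    and H: "H \<in> borel_measurable (base_space I)" "\<And>w. \<bar>H w\<bar> \<le> BH"
      "\<And>w u. w \<in> space (base_space I) \<Longrightarrow> H (set_Umark w y u) = H w"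
  shows "(\<integral>w. H w * c (walk_along Vin (xs @ [y]) w k) \<partial>base_space I) =
    (\<integral>w. H w * min 1 (max 0 (Vmark w y)) * c (walk_along Vin xs w i) \<partial>base_space I) +
    (\<integral>w. H w * (1 - min 1 (max 0 (Vmark w y))) * c (walk_along Vin xs w j) \<partial>base_space I)"
    (is "_ = ?rhs")
proof -
  have "(\<integral>w. H w * c (walk_along Vin (xs @ [y]) w k) \<partial>base_space I) =
      (\<integral>w. H w * (if Umark w y < Vmark w y then c (walk_along Vin xs w i) else c (walk_along Vin xs w j))
        \<partial>base_space I)"
    using y k by (intro Bochner_Integration.integral_cong) (auto simp: walk_step_def)
  also have "\<dots> = ?rhs"
  proof -
    have meas: "(\<lambda>w. c (walk_along Vin xs w a)) \<in> borel_measurable (base_space I)" for a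
      using xs(1) by (intro measurable_compose[OF measurable_walk_along, of _ _ c]) auto
    have le: "\<bar>c (walk_along Vin xs w a)\<bar> \<le> (\<Sum>u\<in>S. \<bar>c u\<bar>)" if "a \<in> S" for a w
      by (rule abs_le_sum_abs[OF xs(3) walk_along_in[OF xs(2) that]])
    show ?thesis
      using H(3) y(2)
      by (intro integral_if_Umark_less_Vmark[OF y(1) H(1) meas meas H(2) le[OF xs(4)] le[OF xs(5)]]) simp
  qed
  finally show ?thesis .
qed

lemma integral_opinion_along_snoc:
  fixes H :: "(('v \<times> 'v) \<times> int \<Rightarrow> real \<times> real \<times> real) \<Rightarrow> real" and c :: "'v \<Rightarrow> real"
  assumes y: "y \<in> I" "fst y = (i, j)" and k: "k \<in> {i, j} \<inter> Vin"
    and xs: "set xs \<subseteq> I" "fst ` set xs \<subseteq> S \<times> S" "finite S" "i \<in> S" "j \<in> S"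
    and H [measurable]: "H \<in> borel_measurable (base_space I)" and H_le: "\<And>w. \<bar>H w\<bar> \<le> BH"
  shows "(\<integral>w. H w * opinion_along Vin (xs @ [y]) w c k \<partial>base_space I) =
    (\<integral>w. H w * min 1 (max 0 (Vmark w y)) * opinion_along Vin xs w c i \<partial>base_space I) +
    (\<integral>w. H w * (1 - min 1 (max 0 (Vmark w y))) * opinion_along Vin xs w c j \<partial>base_space I)"
proof -
  interpret prob_space "base_space I" by (rule prob_space_base_space)
  define p where "p w = min 1 (max 0 (Vmark w y))" for w
  define F where "F a w = opinion_along Vin xs w c a" for a w
  have [measurable]: "p \<in> borel_measurable (base_space I)"
    unfolding p_def using y(1) by measurable
  have [measurable]: "F a \<in> borel_measurable (base_space I)" for a
    unfolding F_def using xs(1) by (intro measurable_opinion_along) auto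
  have "AE w in base_space I. \<forall>x\<in>insert y (set xs). 0 < gap w x \<and> 0 \<le> Vmark w x \<and> Vmark w x \<le> 1"
    by (rule AE_marks_in_range) (use y(1) xs(1) in \<open>auto intro: countable_finite\<close>)
  then have AE_Vmark: "AE w in base_space I. 0 \<le> Vmark w y \<and> Vmark w y \<le> 1 \<and> \<bar>F i w\<bar> \<le> (\<Sum>u\<in>S. \<bar>c u\<bar>) \<and>
      \<bar>F j w\<bar> \<le> (\<Sum>u\<in>S. \<bar>c u\<bar>)"
  proof eventually_elim
    case (elim w)
    have "\<forall>u\<in>S. \<bar>c u\<bar> \<le> (\<Sum>u\<in>S. \<bar>c u\<bar>)"
      by (simp add: abs_le_sum_abs xs(3))
    with elim show ?case
      unfolding F_def by (auto intro!: abs_opinion_along_le[OF _ xs(2)] xs(4,5))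
  qed
  have weighted: "integrable (base_space I) (\<lambda>w. H w * q w * F a w)"
    if "a \<in> {i, j}" "q \<in> borel_measurable (base_space I)" "\<And>w. 0 \<le> q w \<and> q w \<le> 1" for a q
  proof (rule integrable_const_bound)
    show "AE w in base_space I. norm (H w * q w * F a w) \<le> BH * 1 * (\<Sum>u\<in>S. \<bar>c u\<bar>)"
      using AE_Vmark
    proof eventually_elim
      case (elim w)
      then have "\<bar>F a w\<bar> \<le> (\<Sum>u\<in>S. \<bar>c u\<bar>)"
        using that(1) by auto
      moreover have "\<bar>H w * q w\<bar> \<le> BH * 1"
        using H_le that(3)[of w] by (intro abs_mult_le_mult) auto
      ultimately show ?case
        by (simp add: abs_mult_le_mult)
    qed
  qed (use that(2) in measurable)
  have "(\<integral>w. H w * opinion_along Vin (xs @ [y]) w c k \<partial>base_space I) =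
      (\<integral>w. H w * p w * F i w + H w * (1 - p w) * F j w \<partial>base_space I)"
  proof (rule integral_cong_AE)
    show "AE w in base_space I. H w * opinion_along Vin (xs @ [y]) w c k = H w * p w * F i w + H w * (1 - p w) * F j w"
      using AE_Vmark by eventually_elim (use y k in \<open>auto simp: F_def p_def opinion_update_def algebra_simps\<close>)
  qed (use y(1) xs(1) in \<open>measurable, auto\<close>)
  also have "\<dots> = (\<integral>w. H w * p w * F i w \<partial>base_space I) + (\<integral>w. H w * (1 - p w) * F j w \<partial>base_space I)"
    by (intro Bochner_Integration.integral_add weighted) (auto simp: p_def, use y(1) in measurable)
  finally show ?thesis
    unfolding p_def F_def .
qed

lemma integral_walk_along_eq_integral_opinion_along:
  fixes H :: "(('v \<times> 'v) \<times> int \<Rightarrow> real \<times> real \<times> real) \<Rightarrow> real" and c :: "'v \<Rightarrow> real"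
  assumes "set L \<subseteq> I" "distinct L" "fst ` set L \<subseteq> (Vin \<inter> S) \<times> S" "finite S" "k \<in> S"
    and "H \<in> borel_measurable (base_space I)" "\<And>w. \<bar>H w\<bar> \<le> BH"
    and "\<And>x w u. x \<in> set L \<Longrightarrow> w \<in> space (base_space I) \<Longrightarrow> H (set_Umark w x u) = H w"
  shows "(\<integral>w. H w * c (walk_along Vin L w k) \<partial>base_space I) =
    (\<integral>w. H w * opinion_along Vin L w c k \<partial>base_space I)"
  using assms(1-3,5-8)
proof (induction L arbitrary: k H rule: rev_induct)
  case Nil
  then show ?case by simp
next
  case (snoc y xs)
  obtain i j where y: "fst y = (i, j)" by fastforce
  have xs: "set xs \<subseteq> I" "distinct xs" "fst ` set xs \<subseteq> (Vin \<inter> S) \<times> S" and "y \<in> I" "y \<notin> set xs"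
    and ij: "i \<in> Vin" "i \<in> S" "j \<in> S"
    using snoc.prems(1-3) y by auto
  have xs_S: "fst ` set xs \<subseteq> S \<times> S"
    using xs(3) by auto
  have H [measurable]: "H \<in> borel_measurable (base_space I)" and H_le: "\<And>w. \<bar>H w\<bar> \<le> BH"
    and H_inv: "\<And>x w u. x \<in> set xs \<Longrightarrow> w \<in> space (base_space I) \<Longrightarrow> H (set_Umark w x u) = H w"
    using snoc.prems(5-7) by auto
  note IH = snoc.IH[OF xs]
  show ?case
  proof (cases "k \<in> {i, j} \<inter> Vin")
    case False
    define t where "t = (if k \<in> {i, j} then j else k)"
    have "t \<in> S"
      using ij snoc.prems(4) by (simp add: t_def)
    have "walk_step Vin v u (fst y) k = t" "opinion_update Vin v (fst y) g k = g t" for v u g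
      using False ij by (auto simp: y t_def walk_step_def opinion_update_def)
    then show ?thesis
      using IH[OF \<open>t \<in> S\<close> H H_le H_inv] by simp
  next
    case True
    define p where "p w = min 1 (max 0 (Vmark w y))" for w
    have [measurable]: "p \<in> borel_measurable (base_space I)"
      unfolding p_def using \<open>y \<in> I\<close> by measurable
    have "\<bar>p w\<bar> \<le> 1" "\<bar>1 - p w\<bar> \<le> 1" for w
      by (auto simp: p_def)
    then have weights_le: "\<bar>H w * p w\<bar> \<le> BH" "\<bar>H w * (1 - p w)\<bar> \<le> BH" for w
      using abs_mult_le_mult[OF H_le] by (metis mult.right_neutral)+
    have weights_inv: "H (set_Umark w x u) * p (set_Umark w x u) = H w * p w"
      "H (set_Umark w x u) * (1 - p (set_Umark w x u)) = H w * (1 - p w)"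
      if "x \<in> set xs" "w \<in> space (base_space I)" for x w u
      using H_inv[OF that] by (simp_all add: p_def)
    have "(\<integral>w. H w * c (walk_along Vin (xs @ [y]) w k) \<partial>base_space I) =
        (\<integral>w. H w * p w * c (walk_along Vin xs w i) \<partial>base_space I) +
        (\<integral>w. H w * (1 - p w) * c (walk_along Vin xs w j) \<partial>base_space I)"
      unfolding p_def using snoc.prems(7) ij
      by (intro integral_walk_along_snoc[OF \<open>y \<in> I\<close> \<open>y \<notin> set xs\<close> y True xs(1) xs_S \<open>finite S\<close> _ _ H H_le]) auto
    also have "\<dots> = (\<integral>w. H w * p w * opinion_along Vin xs w c i \<partial>base_space I) +
        (\<integral>w. H w * (1 - p w) * opinion_along Vin xs w c j \<partial>base_space I)"
      using IH[OF ij(2) _ weights_le(1) weights_inv(1)] IH[OF ij(3) _ weights_le(2) weights_inv(2)] by simp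
    also have "\<dots> = (\<integral>w. H w * opinion_along Vin (xs @ [y]) w c k \<partial>base_space I)"
      unfolding p_def using ij
      by (intro integral_opinion_along_snoc[OF \<open>y \<in> I\<close> y True xs(1) xs_S \<open>finite S\<close> _ _ H H_le, symmetric])
    finally show ?thesis .
  qed
qed

section \<open>Measurability of the time-ordered event list\<close>

definition sort_by_rel :: "'i set \<Rightarrow> ('i \<times> 'i) set \<Rightarrow> 'i list" where
  "sort_by_rel A R = (SOME xs. distinct xs \<and> set xs = A \<and> sorted_wrt (\<lambda>x y. (x, y) \<in> R) xs)"

lemma sorted_events_eq_sort_by_rel:
  assumes "finite A"
  shows "sorted_events tm A = sort_by_rel A {(x, y) \<in> A \<times> A. tm x \<le> tm y}"
proof -
  have "sorted_wrt (\<lambda>x y. tm x \<le> tm y) xs \<longleftrightarrow> sorted_wrt (\<lambda>x y. (x, y) \<in> {(x, y) \<in> A \<times> A. tm x \<le> tm y}) xs"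
    if "set xs = A" for xs
    using that by (auto elim: sorted_wrt_mono_rel[rotated])
  then have "(\<lambda>xs. distinct xs \<and> set xs = A \<and> sorted_wrt (\<lambda>x y. tm x \<le> tm y) xs) =
      (\<lambda>xs. distinct xs \<and> set xs = A \<and> sorted_wrt (\<lambda>x y. (x, y) \<in> {(x, y) \<in> A \<times> A. tm x \<le> tm y}) xs)"
    by blast
  then show ?thesis
    unfolding sorted_events_def sort_by_rel_def using assms by simp
qed

lemma sorted_events_spec:
  assumes "finite A"
  shows "distinct (sorted_events tm A) \<and> set (sorted_events tm A) = A \<and> sorted_wrt (\<lambda>x y. tm x \<le> tm y) (sorted_events tm A)"
proof -
  obtain xs where "set xs = A" "distinct xs"
    using finite_distinct_list[OF assms] by blast
  then have "\<exists>ys. distinct ys \<and> set ys = A \<and> sorted_wrt (\<lambda>x y. tm x \<le> tm y) ys"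
    by (intro exI[of _ "sort_key tm xs"]) (simp add: sorted_sort_key[unfolded sorted_map])
  from someI_ex[OF this] show ?thesis
    unfolding sorted_events_def using assms by simp
qed

lemma distinct_sorted_events: "distinct (sorted_events tm A)"
  and set_sorted_events_subset: "set (sorted_events tm A) \<subseteq> A"
  using sorted_events_spec[of A tm] by (cases "finite A"; simp add: sorted_events_def)+

lemma sets_Collect_set_valued_eq:
  assumes "countable I" "\<And>w. w \<in> space M \<Longrightarrow> F w \<subseteq> I"
    and "\<And>x. x \<in> I \<Longrightarrow> Measurable.pred M (\<lambda>w. x \<in> F w)" and "A \<subseteq> I"
  shows "{w \<in> space M. F w = A} \<in> sets M"
proof -
  have "{w \<in> space M. F w = A} = {w \<in> space M. \<forall>x\<in>I. x \<in> F w \<longleftrightarrow> x \<in> A}"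
    using assms(2,4) by blast
  also have "\<dots> \<in> sets M"
    using assms(3) by (intro sets.sets_Collect_countable_All'[OF _ assms(1)]) measurable
  finally show ?thesis .
qed

lemma measurable_sorted_events:
  fixes tm :: "'a \<Rightarrow> 'i \<Rightarrow> real" and evs :: "'a \<Rightarrow> 'i set"
  assumes I: "countable I" and evs_I: "\<And>w. w \<in> space M \<Longrightarrow> evs w \<subseteq> I"
    and evs_pred [measurable]: "\<And>x. x \<in> I \<Longrightarrow> Measurable.pred M (\<lambda>w. x \<in> evs w)"
    and [measurable]: "\<And>x. x \<in> I \<Longrightarrow> (\<lambda>w. tm w x) \<in> borel_measurable M"
  shows "(\<lambda>w. sorted_events (tm w) (evs w)) \<in> measurable M (count_space (lists I))"
proof -
  define R where "R w = {(x, y) \<in> evs w \<times> evs w. tm w x \<le> tm w y}" for w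
  define C where "C = {A. finite A \<and> A \<subseteq> I} \<times> {R. finite R \<and> R \<subseteq> I \<times> I}"
  have "countable C"
    unfolding C_def using I by (intro countable_SIGMA countable_Collect_finite_subset) auto
  have evs_eq: "{w \<in> space M. evs w = A} \<in> sets M" if "A \<subseteq> I" for A
    using I evs_I evs_pred that by (rule sets_Collect_set_valued_eq)
  have R_eq: "{w \<in> space M. R w = A} \<in> sets M" if "A \<subseteq> I \<times> I" for A
  proof (rule sets_Collect_set_valued_eq[OF countable_SIGMA[OF I I] _ _ that])
    show "R w \<subseteq> I \<times> I" if "w \<in> space M" for w
      using evs_I[OF that] by (auto simp: R_def)
    show "Measurable.pred M (\<lambda>w. p \<in> R w)" if "p \<in> I \<times> I" for p
      using that by (cases p) (simp add: R_def)
  qed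
  have finite_evs: "{w \<in> space M. finite (evs w)} \<in> sets M"
  proof -
    have "{w \<in> space M. finite (evs w)} = {w \<in> space M. \<exists>A\<in>{A. finite A \<and> A \<subseteq> I}. evs w = A}"
      using evs_I by auto
    also have "\<dots> \<in> sets M"
      using evs_eq by (intro sets.sets_Collect_countable_Ex'[OF _ countable_Collect_finite_subset[OF I]]) auto
    finally show ?thesis .
  qed
  define \<Psi> where "\<Psi> w = (if finite (evs w) then Some (evs w, R w) else None)" for w
  have countable_range: "countable (insert None (Some ` C))"
    using \<open>countable C\<close> by simp
  have \<Psi>_meas: "\<Psi> \<in> measurable M (count_space (insert None (Some ` C)))"
    unfolding measurable_count_space_eq_countable[OF countable_range]
  proof (intro conjI ballI)
    have "(evs w, R w) \<in> C" if "w \<in> space M" "finite (evs w)" for w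
      using that evs_I[OF that(1)] by (auto simp: C_def R_def intro: finite_subset[of _ "evs w \<times> evs w"])
    then show "\<Psi> \<in> space M \<rightarrow> insert None (Some ` C)"
      by (auto simp: \<Psi>_def)
    fix a assume "a \<in> insert None (Some ` C)"
    then consider "a = None" | A R' where "a = Some (A, R')" "finite A" "A \<subseteq> I" "R' \<subseteq> I \<times> I"
      by (auto simp: C_def)
    then show "\<Psi> -` {a} \<inter> space M \<in> sets M"
    proof cases
      case 1
      then have "\<Psi> -` {a} \<inter> space M = space M - {w \<in> space M. finite (evs w)}"
        by (auto simp: \<Psi>_def)
      then show ?thesis
        using finite_evs by auto
    next
      case 2
      then have "\<Psi> -` {a} \<inter> space M = {w \<in> space M. evs w = A} \<inter> {w \<in> space M. R w = R'}"
        by (auto simp: \<Psi>_def split: if_splits)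
      then show ?thesis
        using evs_eq R_eq 2 by auto
    qed
  qed
  have sorted_events_eq: "sorted_events (tm w) (evs w) = (case \<Psi> w of None \<Rightarrow> [] | Some (A, R') \<Rightarrow> sort_by_rel A R')" for w
    by (cases "finite (evs w)")
      (simp add: \<Psi>_def sorted_events_eq_sort_by_rel R_def, simp add: \<Psi>_def sorted_events_def)
  show ?thesis
    unfolding measurable_count_space_eq_countable[OF countable_lists[OF I]]
  proof (intro conjI ballI)
    show "(\<lambda>w. sorted_events (tm w) (evs w)) \<in> space M \<rightarrow> lists I"
      using evs_I set_sorted_events_subset[of "tm _" "evs _"] by (force simp: lists_eq_set)
    fix L
    have "\<Psi> w \<in> insert None (Some ` C)" if "w \<in> space M" for w
      using measurable_space[OF \<Psi>_meas that] by simp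
    then have "(\<lambda>w. sorted_events (tm w) (evs w)) -` {L} \<inter> space M =
        \<Psi> -` ({p. (case p of None \<Rightarrow> [] | Some (A, R') \<Rightarrow> sort_by_rel A R') = L} \<inter> insert None (Some ` C)) \<inter> space M"
      unfolding sorted_events_eq by auto
    then show "(\<lambda>w. sorted_events (tm w) (evs w)) -` {L} \<inter> space M \<in> sets M"
      by (simp only:) (rule measurable_sets[OF \<Psi>_meas], auto)
  qed
qed

section \<open>The \<sigma>-algebra generated by event times and V-marks\<close>

definition NV_map :: "('v \<times> 'v) set \<Rightarrow> (('v \<times> 'v) \<times> int \<Rightarrow> real \<times> real \<times> real)
    \<Rightarrow> (('v \<times> 'v) \<times> int \<Rightarrow> real) \<times> (('v \<times> 'v) \<times> int \<Rightarrow> real)" where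
  "NV_map E w = (\<lambda>x\<in>edge_index E. evtime w x, \<lambda>x\<in>edge_index E. Vmark w x)"

abbreviation NV_space :: "('v \<times> 'v) set \<Rightarrow> ((('v \<times> 'v) \<times> int \<Rightarrow> real) \<times> (('v \<times> 'v) \<times> int \<Rightarrow> real)) measure" where
  "NV_space E \<equiv> (\<Pi>\<^sub>M x\<in>edge_index E. borel) \<Otimes>\<^sub>M (\<Pi>\<^sub>M x\<in>edge_index E. borel)"

lemma NV_algebra_eq_vimage_algebra:
  "NV_algebra E = vimage_algebra (space (base_space (edge_index E))) (NV_map E) (NV_space E)"
  unfolding NV_algebra_def NV_map_def ..

lemma measurable_NV_map: "NV_map E \<in> measurable (base_space (edge_index E)) (NV_space E)"
  unfolding NV_map_def by (intro measurable_Pair measurable_restrict measurable_evtime measurable_Vmark)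

lemma space_NV_algebra [simp]: "space (NV_algebra E) = space (base_space (edge_index E))"
  unfolding NV_algebra_eq_vimage_algebra by simp

lemma subalgebra_NV_algebra: "subalgebra (base_space (edge_index E)) (NV_algebra E)"
  using measurable_NV_map[of E]
  unfolding subalgebra_def NV_algebra_eq_vimage_algebra measurable_iff_sets by auto

lemma measurable_NV_map_NV_algebra: "NV_map E \<in> measurable (NV_algebra E) (NV_space E)"
  unfolding NV_algebra_eq_vimage_algebra
  using measurable_space[OF measurable_NV_map] by (intro measurable_vimage_algebra1) auto

lemma measurable_evtime_NV_algebra [measurable]:
  assumes "x \<in> edge_index E"
  shows "(\<lambda>w. evtime w x) \<in> borel_measurable (NV_algebra E)"
proof -
  have "(\<lambda>w. fst (NV_map E w) x) \<in> borel_measurable (NV_algebra E)"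
    using measurable_NV_map_NV_algebra assms by measurable
  then show ?thesis
    using assms by (simp add: NV_map_def)
qed

lemma measurable_Vmark_NV_algebra [measurable]:
  assumes "x \<in> edge_index E"
  shows "(\<lambda>w. Vmark w x) \<in> borel_measurable (NV_algebra E)"
proof -
  have "(\<lambda>w. snd (NV_map E w) x) \<in> borel_measurable (NV_algebra E)"
    using measurable_NV_map_NV_algebra assms by measurable
  then show ?thesis
    using assms by (simp add: NV_map_def)
qed

lemma set_Umark_in_NV_algebra_iff:
  assumes "A \<in> sets (NV_algebra E)" "w \<in> space (base_space (edge_index E))" "x \<in> edge_index E"
  shows "set_Umark w x u \<in> A \<longleftrightarrow> w \<in> A"
proof -
  have "set_Umark w x u \<in> space (base_space (edge_index E))"
    using assms(2,3) by (auto simp: base_space_def space_PiM PiE_iff extensional_def set_Umark_def)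
  moreover have "NV_map E (set_Umark w x u) = NV_map E w"
    by (simp add: NV_map_def)
  moreover have NV_map_space: "NV_map E \<in> space (base_space (edge_index E)) \<rightarrow> space (NV_space E)"
    using measurable_space[OF measurable_NV_map] by auto
  obtain S where "A = NV_map E -` S \<inter> space (base_space (edge_index E))"
    using assms(1) unfolding NV_algebra_eq_vimage_algebra sets_vimage_algebra2[OF NV_map_space] by blast
  ultimately show ?thesis
    using assms(2) by auto
qed

section \<open>The opinion process and the backward walks along the event list\<close>

definition event_list :: "('v \<times> 'v) set \<Rightarrow> real \<Rightarrow> (('v \<times> 'v) \<times> int \<Rightarrow> real \<times> real \<times> real) \<Rightarrow> (('v \<times> 'v) \<times> int) list"
  where "event_list E s w = sorted_events (evtime w) (events_R E s w)"

lemma backward_walk_eq_walk_along: "backward_walk Vin E s k w = walk_along Vin (event_list E s w) w k"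
  unfolding backward_walk_def walk_along_def event_list_def ..

lemma opinion_eq_opinion_along:
  "events_O E s w = events_R E s w \<Longrightarrow> opinion Vin E O0 s w = opinion_along Vin (event_list E s w) w O0"
  unfolding opinion_def opinion_along_def event_list_def by simp

lemma set_event_list_subset: "set (event_list E s w) \<subseteq> edge_index E"
  using set_sorted_events_subset unfolding event_list_def events_R_def by fast

lemma fst_edge_index: "fst ` edge_index E = E"
  unfolding edge_index_def by force

lemma countable_edge_index: "finite E \<Longrightarrow> countable (edge_index E)"
  unfolding edge_index_def by (intro countable_SIGMA) (auto intro: countable_finite)

lemma evtime_nonzero:
  assumes "\<And>m. 0 < gap w (e, m)"
  shows "evtime w (e, n) \<noteq> 0"
proof (cases "1 \<le> n")
  case True
  then have "0 < (\<Sum>m\<in>{1..n}. gap w (e, m))"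
    using assms by (intro sum_pos) auto
  with True show ?thesis by (simp add: evtime_def)
next
  case False
  then have "0 < (\<Sum>m\<in>{n..0}. gap w (e, m))"
    using assms by (intro sum_pos) auto
  with False show ?thesis by (simp add: evtime_def)
qed

lemma AE_events_O_eq_events_R:
  assumes "finite E"
  shows "AE w in base_space (edge_index E). events_O E s w = events_R E s w"
proof -
  have "AE w in base_space (edge_index E). \<forall>x\<in>edge_index E. 0 < gap w x \<and> 0 \<le> Vmark w x \<and> Vmark w x \<le> 1"
    by (rule AE_marks_in_range[OF countable_edge_index[OF assms] order_refl])
  then show ?thesis
  proof eventually_elim
    case (elim w)
    then have "evtime w x \<noteq> 0" if "x \<in> edge_index E" for x
      using that evtime_nonzero[of w "fst x" "snd x"] by (auto simp: edge_index_def)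
    then show ?case
      unfolding events_O_def events_R_def by force
  qed
qed

lemma
  assumes "finite E" "\<And>x. x \<in> edge_index E \<Longrightarrow> (\<lambda>w. evtime w x) \<in> borel_measurable N"
  shows measurable_event_list: "event_list E s \<in> measurable N (count_space (lists (edge_index E)))"
    and measurable_sorted_events_O:
      "(\<lambda>w. sorted_events (evtime w) (events_O E s w)) \<in> measurable N (count_space (lists (edge_index E)))"
proof -
  from countable_edge_index[OF assms(1)]
  show "event_list E s \<in> measurable N (count_space (lists (edge_index E)))"
    "(\<lambda>w. sorted_events (evtime w) (events_O E s w)) \<in> measurable N (count_space (lists (edge_index E)))"
    unfolding event_list_def events_R_def events_O_def using assms(2)
    by (intro measurable_sorted_events; auto)+
qed

locale opinion_model =
  fixes Vin S :: "'v set" and E :: "('v \<times> 'v) set"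
  assumes finite_E: "finite E" and finite_S: "finite S" and edges: "E \<subseteq> (Vin \<inter> S) \<times> S"
begin

abbreviation M :: "(('v \<times> 'v) \<times> int \<Rightarrow> real \<times> real \<times> real) measure"
  where "M \<equiv> base_space (edge_index E)"

lemma fst_event_list_subset: "fst ` set (event_list E s w) \<subseteq> (Vin \<inter> S) \<times> S"
  using image_mono[OF set_event_list_subset[of E s w], of fst] edges
  unfolding fst_edge_index by (rule order_trans)

lemma event_list_closed: "fst ` set (event_list E s w) \<subseteq> S \<times> S"
  using fst_event_list_subset[of s w] by (rule order_trans) auto

lemma abs_backward_walk_le:
  fixes O0 :: "'v \<Rightarrow> real"
  assumes "k \<in> S"
  shows "\<bar>O0 (backward_walk Vin E s k w)\<bar> \<le> (\<Sum>u\<in>S. \<bar>O0 u\<bar>)"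
  unfolding backward_walk_eq_walk_along
  by (rule abs_le_sum_abs[OF finite_S walk_along_in[OF event_list_closed assms]])

lemma AE_abs_opinion_le:
  assumes "k \<in> S"
  shows "AE w in M. \<bar>opinion Vin E O0 s w k\<bar> \<le> (\<Sum>u\<in>S. \<bar>O0 u\<bar>)"
proof -
  have "AE w in M. \<forall>x\<in>edge_index E. 0 < gap w x \<and> 0 \<le> Vmark w x \<and> Vmark w x \<le> 1"
    by (rule AE_marks_in_range[OF countable_edge_index[OF finite_E] order_refl])
  with AE_events_O_eq_events_R[OF finite_E, of s] show ?thesis
  proof eventually_elim
    case (elim w)
    have "\<forall>u\<in>S. \<bar>O0 u\<bar> \<le> (\<Sum>u\<in>S. \<bar>O0 u\<bar>)"
      using finite_S by (simp add: abs_le_sum_abs)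
    moreover have "\<forall>x\<in>set (event_list E s w). 0 \<le> Vmark w x \<and> Vmark w x \<le> 1"
      using elim(2) set_event_list_subset[of E s w] by auto
    ultimately show ?case
      unfolding opinion_eq_opinion_along[OF elim(1)]
      by (intro abs_opinion_along_le[OF _ event_list_closed _ assms])
  qed
qed

lemma measurable_backward_walk [measurable]:
  fixes O0 :: "'v \<Rightarrow> real"
  shows "(\<lambda>w. O0 (backward_walk Vin E s k w)) \<in> borel_measurable M"
  unfolding backward_walk_eq_walk_along
proof (rule measurable_compose_countable'[OF _ measurable_event_list[OF finite_E]])
  show "(\<lambda>w. O0 (walk_along Vin L w k)) \<in> borel_measurable M" if "L \<in> lists (edge_index E)" for L
    using that by (intro measurable_compose[OF measurable_walk_along, of _ _ O0]) auto
qed (auto simp: countable_edge_index[OF finite_E])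

lemma measurable_opinion_NV_algebra:
  "(\<lambda>w. opinion Vin E O0 s w k) \<in> borel_measurable (NV_algebra E)"
  unfolding opinion_def opinion_along_def[symmetric]
proof (rule measurable_compose_countable'[OF _ measurable_sorted_events_O[OF finite_E]])
  show "(\<lambda>w. opinion_along Vin L w O0 k) \<in> borel_measurable (NV_algebra E)" if "L \<in> lists (edge_index E)" for L
    using that by (intro measurable_opinion_along) auto
qed (auto simp: countable_edge_index[OF finite_E])

lemma measurable_opinion [measurable]: "(\<lambda>w. opinion Vin E O0 s w k) \<in> borel_measurable M"
  using measurable_from_subalg[OF subalgebra_NV_algebra measurable_opinion_NV_algebra] .

lemma integrable_backward_walk:
  fixes O0 :: "'v \<Rightarrow> real"
  assumes "k \<in> S"
  shows "integrable M (\<lambda>w. O0 (backward_walk Vin E s k w))"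
proof -
  interpret prob_space M
    by (rule prob_space_base_space)
  show ?thesis
    using abs_backward_walk_le[OF assms]
    by (intro integrable_const_bound[where B="\<Sum>u\<in>S. \<bar>O0 u\<bar>"] AE_I2) auto
qed

lemma integrable_opinion:
  assumes "k \<in> S"
  shows "integrable M (\<lambda>w. opinion Vin E O0 s w k)"
proof -
  interpret prob_space M
    by (rule prob_space_base_space)
  show ?thesis
    using AE_abs_opinion_le[OF assms]
    by (intro integrable_const_bound[where B="\<Sum>u\<in>S. \<bar>O0 u\<bar>"]) auto
qed

lemma integral_event_list_piece:
  fixes O0 :: "'v \<Rightarrow> real"
  assumes A: "A \<in> sets (NV_algebra E)" and L: "L \<in> lists (edge_index E)" and "k \<in> S"
  shows "(\<integral>w. indicator (event_list E s -` {L} \<inter> space M) w * (indicator A w * O0 (backward_walk Vin E s k w)) \<partial>M) =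
    (\<integral>w. indicator (event_list E s -` {L} \<inter> space M) w * (indicator A w * opinion Vin E O0 s w k) \<partial>M)"
proof -
  define P where "P = event_list E s -` {L} \<inter> space M"
  define H where "H = (indicator (A \<inter> P) :: _ \<Rightarrow> real)"
  have "P \<in> sets (NV_algebra E)"
    using measurable_sets[OF measurable_event_list[OF finite_E measurable_evtime_NV_algebra[of _ E], where s=s], where S="{L}"]
    using L by (simp add: P_def)
  with A have AP: "A \<inter> P \<in> sets (NV_algebra E)"
    by auto
  then have [measurable]: "A \<inter> P \<in> sets M"
    using subalgebra_NV_algebra by (auto simp: subalgebra_def)
  have H_meas [measurable]: "H \<in> borel_measurable M"
    unfolding H_def by measurable
  have integrand: "indicator P w * (indicator A w * f w) = H w * f w" for f :: "_ \<Rightarrow> real" and w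
    by (simp add: H_def indicator_inter_arith)
  show ?thesis
  proof (cases "distinct L")
    case False
    then have "P = {}"
      by (auto simp: P_def event_list_def distinct_sorted_events)
    then show ?thesis
      by (simp add: P_def)
  next
    case True
    have "(\<integral>w. H w * O0 (backward_walk Vin E s k w) \<partial>M) = (\<integral>w. H w * O0 (walk_along Vin L w k) \<partial>M)"
      by (intro Bochner_Integration.integral_cong) (auto simp: H_def P_def backward_walk_eq_walk_along split: split_indicator)
    also have "\<dots> = (\<integral>w. H w * opinion_along Vin L w O0 k \<partial>M)"
    proof (rule integral_walk_along_eq_integral_opinion_along[OF _ True _ finite_S \<open>k \<in> S\<close>])
      show "set L \<subseteq> edge_index E"
        using L by auto
      then show "fst ` set L \<subseteq> (Vin \<inter> S) \<times> S"
        using edges fst_edge_index[of E] by blast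
      show "\<bar>H w\<bar> \<le> 1" for w
        by (simp add: H_def)
      show "H (set_Umark w x u) = H w" if "x \<in> set L" "w \<in> space M" for x w u
        using set_Umark_in_NV_algebra_iff[OF AP that(2), of x u] that(1) \<open>set L \<subseteq> edge_index E\<close>
        by (auto simp: H_def indicator_def)
    qed (rule H_meas)
    also have "\<dots> = (\<integral>w. H w * opinion Vin E O0 s w k \<partial>M)"
    proof (rule integral_cong_AE)
      show "AE w in M. H w * opinion_along Vin L w O0 k = H w * opinion Vin E O0 s w k"
        using AE_events_O_eq_events_R[OF finite_E, of s]
        by eventually_elim (auto simp: H_def P_def opinion_eq_opinion_along split: split_indicator)
    qed (use L in \<open>measurable, auto\<close>)
    finally show ?thesis
      unfolding P_def[symmetric] integrand[where f="\<lambda>w. O0 (backward_walk Vin E s k w)"]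
        integrand[where f="\<lambda>w. opinion Vin E O0 s w k"] .
  qed
qed

lemma set_integral_backward_walk_eq_opinion:
  fixes O0 :: "'v \<Rightarrow> real"
  assumes A: "A \<in> sets (NV_algebra E)" and "k \<in> S"
  shows "(\<integral>w\<in>A. O0 (backward_walk Vin E s k w) \<partial>M) = (\<integral>w\<in>A. opinion Vin E O0 s w k \<partial>M)"
proof -
  interpret prob_space M
    by (rule prob_space_base_space)
  have [measurable]: "A \<in> sets M"
    using A subalgebra_NV_algebra by (auto simp: subalgebra_def)
  have "(\<integral>w. indicator A w * O0 (backward_walk Vin E s k w) \<partial>M) = (\<integral>w. indicator A w * opinion Vin E O0 s w k \<partial>M)"
  proof (rule integral_eq_by_countable_partition[OF _ measurable_event_list[OF finite_E measurable_evtime[of _ E], where s=s]])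
    show "AE w in M. \<bar>indicator A w * O0 (backward_walk Vin E s k w)\<bar> \<le> (\<Sum>u\<in>S. \<bar>O0 u\<bar>)"
      using abs_backward_walk_le[OF \<open>k \<in> S\<close>] abs_mult_le_mult[of "indicator A _" 1]
      by (intro AE_I2) (auto split: split_indicator)
    show "AE w in M. \<bar>indicator A w * opinion Vin E O0 s w k\<bar> \<le> (\<Sum>u\<in>S. \<bar>O0 u\<bar>)"
      using AE_abs_opinion_le[OF \<open>k \<in> S\<close>]
      by eventually_elim (auto split: split_indicator)
  qed (auto simp: countable_edge_index[OF finite_E] integral_event_list_piece[OF A _ \<open>k \<in> S\<close>])
  then show ?thesis
    by (simp add: set_lebesgue_integral_def mult.commute)
qed

end

theorem mainTheorem7:
  fixes Vin Vb :: "'v set" and E :: "('v \<times> 'v) set"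
    and T O0 :: "'v \<Rightarrow> real" and s :: real and k :: 'v
  assumes "finite Vin" and "finite Vb" and "Vin \<inter> Vb = {}" and "finite E"
    and "\<forall>(i, j)\<in>E. i \<in> Vin \<and> j \<in> Vin \<union> Vb"
    and "\<forall>j\<in>Vb. T j > 0"
    and "\<forall>j\<in>Vb. O0 j = T j"
    and "s > 0"
    and "k \<in> Vin \<union> Vb"
  shows "AE \<omega> in base_space (edge_index E).
           opinion Vin E O0 s \<omega> k =
           real_cond_exp (base_space (edge_index E)) (NV_algebra E)
             (\<lambda>\<omega>'. O0 (backward_walk Vin E s k \<omega>')) \<omega>"
proof -
  interpret opinion_model Vin "Vin \<union> Vb" E
    using assms(1,2,4,5) by unfold_locales auto
  interpret prob_space M
    by (rule prob_space_base_space)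
  interpret finite_measure_subalgebra M "NV_algebra E"
    by unfold_locales (rule subalgebra_NV_algebra)
  have "AE w in M. real_cond_exp M (NV_algebra E) (\<lambda>w. O0 (backward_walk Vin E s k w)) w = opinion Vin E O0 s w k"
    using set_integral_backward_walk_eq_opinion[OF _ assms(9)] integrable_backward_walk[OF assms(9)]
      integrable_opinion[OF assms(9)] measurable_opinion_NV_algebra
    by (rule real_cond_exp_charact)
  then show ?thesis
    by (auto elim: AE_mp)
qed

end
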